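(* Let $u_1,\dots,u_n\in\mathbb{R}^d$ be nonzero vectors with $\langle u_i,u_j\rangle\ge0$ for all $i,j\in[n]$. Suppose there exist subsets $I,J\subseteq[n]$ such that: (i) $\mathrm{span}\{u_i:i\in I\}=\mathrm{span}\{u_j:j\in J\}=\mathrm{span}\{u_i:i\in[n]\}$; (ii) there is $i^*\in I$ with $\langle u_{i^*},u_i\rangle=0$ for all $i\in I\setminus\{i^*\}$; (iii) there is $j^*\in J$ with $\langle u_{j^*},u_j\rangle=0$ for all $j\in J\setminus\{j^*\}$; (iv) $u_{i^*}$ is not parallel to $u_{j^*}$; (v) $\langle u_{i^*},u_{j^*}\rangle\neq0$. Then for no tracial von Neumann algebra $(\mathcal{N},\tau)$ does the matrix $(\langle u_i,u_j\rangle)_{i,j\in[n]}$ admit an $\mathcal{N}^+$-factorization.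
   Context: A von Neumann algebra is a unital $*$-subalgebra of the bounded operators on a Hilbert space that is closed in the weak operator topology. It is tracial if equipped with a linear functional $\tau:\mathcal{N}\to\mathbb{C}$ such that $\tau(x^*x)\ge0$ for all $x$ and $\tau(1)=1$; $\tau(x^*x)=0$ implies $x=0$; $\tau(xy)=\tau(yx)$ for all $x,y$; and the restriction of $\tau$ to the unit ball is continuous in the weak operator topology. An element $p\in\mathcal{N}$ is positive if $p=x^*x$ for some $x\in\mathcal{N}$; $\mathcal{N}^+$ is the set of positive elements. A matrix $X$ admits an $\mathcal{N}^+$-factorization if there exist $p_1,\dots,p_n\in\mathcal{N}^+$ with $X_{ij}=\tau(p_ip_j)$ for all $i,j$. *)

theory Defs
  imports "HOL-Analysis.Analysis"
begin

text \<open>Every complex Hilbert space is unitarily isomorphic to l2(K) for some index set K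
(an orthonormal basis).  We therefore model a Hilbert space as l2 over an arbitrary index
type 'k, and a bounded operator as a function on 'k \<Rightarrow> complex that is linear and bounded on
l2, maps l2 into l2, and is (canonically) zero outside l2.\<close>

definition l2 :: "('k \<Rightarrow> complex) set" where
  "l2 = {v. (\<lambda>k. (cmod (v k))^2) summable_on UNIV}"

definition l2inner :: "('k \<Rightarrow> complex) \<Rightarrow> ('k \<Rightarrow> complex) \<Rightarrow> complex" where
  "l2inner v w = (\<Sum>\<^sub>\<infinity>k. cnj (v k) * w k)"

definition l2norm :: "('k \<Rightarrow> complex) \<Rightarrow> real" where
  "l2norm v = sqrt (\<Sum>\<^sub>\<infinity>k. (cmod (v k))^2)"

type_synonym 'k op = "('k \<Rightarrow> complex) \<Rightarrow> ('k \<Rightarrow> complex)"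

definition l2op :: "'k op \<Rightarrow> bool" where
  "l2op T \<longleftrightarrow> (\<forall>v\<in>l2. T v \<in> l2)
     \<and> (\<forall>v\<in>l2. \<forall>w\<in>l2. T (\<lambda>k. v k + w k) = (\<lambda>k. T v k + T w k))
     \<and> (\<forall>c. \<forall>v\<in>l2. T (\<lambda>k. c * v k) = (\<lambda>k. c * T v k))
     \<and> (\<exists>C. \<forall>v\<in>l2. l2norm (T v) \<le> C * l2norm v)
     \<and> (\<forall>v. v \<notin> l2 \<longrightarrow> T v = (\<lambda>k. 0))"

definition l2id :: "'k op" where
  "l2id v = (if v \<in> l2 then v else (\<lambda>k. 0))"

definition op_zero :: "'k op" where
  "op_zero = (\<lambda>v k. 0)"

definition op_add :: "'k op \<Rightarrow> 'k op \<Rightarrow> 'k op" where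
  "op_add S T = (\<lambda>v k. S v k + T v k)"

definition op_scale :: "complex \<Rightarrow> 'k op \<Rightarrow> 'k op" where
  "op_scale c T = (\<lambda>v k. c * T v k)"

definition is_adjoint :: "'k op \<Rightarrow> 'k op \<Rightarrow> bool" where
  "is_adjoint S T \<longleftrightarrow> l2op S \<and> (\<forall>v\<in>l2. \<forall>w\<in>l2. l2inner (S v) w = l2inner v (T w))"

text \<open>The Hilbert-space adjoint T* (exists and is unique for every bounded operator).\<close>
definition adj :: "'k op \<Rightarrow> 'k op" where
  "adj T = (SOME S. is_adjoint S T)"

definition contraction :: "'k op \<Rightarrow> bool" where
  "contraction T \<longleftrightarrow> (\<forall>v\<in>l2. l2norm (T v) \<le> l2norm v)"

text \<open>Basic weak-operator-topology neighbourhood of T given by finitely many pairs (v,w).\<close>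
definition wot_close :: "(('k \<Rightarrow> complex) \<times> ('k \<Rightarrow> complex)) set \<Rightarrow> real \<Rightarrow> 'k op \<Rightarrow> 'k op \<Rightarrow> bool" where
  "wot_close F \<delta> S T \<longleftrightarrow>
     (\<forall>p\<in>F. cmod (l2inner (fst p) (S (snd p)) - l2inner (fst p) (T (snd p))) < \<delta>)"

definition wot_closed :: "'k op set \<Rightarrow> bool" where
  "wot_closed N \<longleftrightarrow> (\<forall>T. l2op T \<and>
      (\<forall>F \<delta>. finite F \<and> F \<subseteq> l2 \<times> l2 \<and> \<delta> > 0 \<longrightarrow> (\<exists>S\<in>N. wot_close F \<delta> S T))
      \<longrightarrow> T \<in> N)"

definition von_neumann_algebra :: "'k op set \<Rightarrow> bool" where
  "von_neumann_algebra N \<longleftrightarrow>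
     N \<subseteq> {T. l2op T} \<and> l2id \<in> N
     \<and> (\<forall>S\<in>N. \<forall>T\<in>N. op_add S T \<in> N \<and> S \<circ> T \<in> N)
     \<and> (\<forall>c. \<forall>T\<in>N. op_scale c T \<in> N)
     \<and> (\<forall>T\<in>N. adj T \<in> N)
     \<and> wot_closed N"

definition tracial_vna :: "'k op set \<Rightarrow> ('k op \<Rightarrow> complex) \<Rightarrow> bool" where
  "tracial_vna N \<tau> \<longleftrightarrow> von_neumann_algebra N
     \<and> (\<forall>S\<in>N. \<forall>T\<in>N. \<tau> (op_add S T) = \<tau> S + \<tau> T)
     \<and> (\<forall>c. \<forall>T\<in>N. \<tau> (op_scale c T) = c * \<tau> T)
     \<and> (\<forall>x\<in>N. Im (\<tau> (adj x \<circ> x)) = 0 \<and> Re (\<tau> (adj x \<circ> x)) \<ge> 0)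
     \<and> \<tau> l2id = 1
     \<and> (\<forall>x\<in>N. \<tau> (adj x \<circ> x) = 0 \<longrightarrow> x = op_zero)
     \<and> (\<forall>x\<in>N. \<forall>y\<in>N. \<tau> (x \<circ> y) = \<tau> (y \<circ> x))
     \<and> (\<forall>T\<in>N. contraction T \<longrightarrow> (\<forall>\<epsilon>>0. \<exists>F \<delta>. finite F \<and> F \<subseteq> l2 \<times> l2 \<and> \<delta> > 0 \<and>
          (\<forall>S\<in>N. contraction S \<and> wot_close F \<delta> S T \<longrightarrow> cmod (\<tau> S - \<tau> T) < \<epsilon>)))"

definition positive_elems :: "'k op set \<Rightarrow> 'k op set" where
  "positive_elems N = {p. \<exists>x\<in>N. p = adj x \<circ> x}"

definition admits_pos_factorization :: "'k op set \<Rightarrow> ('k op \<Rightarrow> complex) \<Rightarrow> nat \<Rightarrow> (nat \<Rightarrow> nat \<Rightarrow> real) \<Rightarrow> bool" where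
  "admits_pos_factorization N \<tau> n X \<longleftrightarrow>
     (\<exists>p. (\<forall>i<n. p i \<in> positive_elems N) \<and> (\<forall>i<n. \<forall>j<n. complex_of_real (X i j) = \<tau> (p i \<circ> p j)))"

end

theory Submission
  imports Defs "HOL-Library.Function_Algebras"
begin

text \<open>
Put \<open>P = p\<^sub>i\<^sub>*\<close> and \<open>Q = p\<^sub>j\<^sub>*\<close>. Faithfulness of the trace makes \<open>\<Sum> c\<^sub>i p\<^sub>i\<close> depend only
on \<open>\<Sum> c\<^sub>i u\<^sub>i\<close>, and forces \<open>p q = 0\<close> for positive \<open>p, q\<close> with \<open>\<tau>(p q) = 0\<close>. Expanding
\<open>u\<^sub>j\<^sub>*\<close> over \<open>I\<close> and \<open>u\<^sub>i\<^sub>*\<close> over \<open>J\<close>, all terms but one die, so \<open>Q P = \<alpha> P\<^sup>2 = \<beta> Q\<^sup>2\<close>.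
Computing \<open>Q\<^sup>2 P\<close> in two ways gives \<open>\<alpha> \<beta> = 1\<close>; taking traces,
\<open>\<langle>u\<^sub>i\<^sub>*, u\<^sub>j\<^sub>*\<rangle>\<^sup>2 = |u\<^sub>i\<^sub>*|\<^sup>2 |u\<^sub>j\<^sub>*|\<^sup>2\<close>, equality in Cauchy-Schwarz.

Since \<open>adj\<close> is defined by choice, its algebraic laws rest on the existence of adjoints on
\<open>l2\<close>: they are given coordinatewise by \<open>(T\<^sup>* v)\<^sub>k = \<langle>T e\<^sub>k, v\<rangle>\<close>, and Cauchy-Schwarz shows
that this vector lies in \<open>l2\<close>.
\<close>

section \<open>Square-summable sequences\<close>

lemma l2_zero [simp]: "(\<lambda>k. 0) \<in> l2"
  by (simp add: l2_def)

lemma l2_add: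
  assumes "v \<in> l2" "w \<in> l2" shows "(\<lambda>k. v k + w k) \<in> l2"
proof -
  have s: "(\<lambda>k. 2 * (cmod (v k))^2 + 2 * (cmod (w k))^2) summable_on UNIV"
    using assms by (intro summable_on_add summable_on_cmult_right) (auto simp: l2_def)
  have "(cmod (a + b))^2 \<le> 2 * (cmod a)^2 + 2 * (cmod b)^2" for a b :: complex
  proof -
    have "(cmod (a + b))^2 \<le> (cmod a + cmod b)^2"
      by (simp add: norm_triangle_ineq power_mono)
    also have "\<dots> \<le> 2 * (cmod a)^2 + 2 * (cmod b)^2"
      using zero_le_power2[of "cmod a - cmod b"] by (simp add: power2_eq_square algebra_simps)
    finally show ?thesis .
  qed
  then show ?thesis unfolding l2_def mem_Collect_eq
    by (intro summable_on_comparison_test[OF s]) auto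
qed

lemma l2_scale:
  assumes "v \<in> l2" shows "(\<lambda>k. c * v k) \<in> l2"
proof -
  have "(\<lambda>k. (cmod c)^2 * (cmod (v k))^2) summable_on UNIV"
    using assms by (intro summable_on_cmult_right) (auto simp: l2_def)
  then show ?thesis unfolding l2_def by (simp add: norm_mult power_mult_distrib)
qed

lemma l2_finite_support:
  assumes "finite F" "\<And>k. k \<notin> F \<Longrightarrow> v k = 0" shows "v \<in> l2"
proof -
  have "(\<lambda>k. (cmod (v k))^2) summable_on F" using assms by simp
  moreover have "(\<lambda>k. (cmod (v k))^2) summable_on UNIV \<longleftrightarrow> (\<lambda>k. (cmod (v k))^2) summable_on F"
    by (rule summable_on_cong_neutral) (auto simp: assms)
  ultimately show ?thesis unfolding l2_def by simp
qed

lemma l2_abs_summable: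
  assumes "v \<in> l2" "w \<in> l2" shows "(\<lambda>k. norm (cnj (v k) * w k)) summable_on UNIV"
proof -
  have s: "(\<lambda>k. 1/2 * ((cmod (v k))^2 + (cmod (w k))^2)) summable_on UNIV"
    using assms by (intro summable_on_cmult_right summable_on_add) (auto simp: l2_def)
  have "cmod (cnj a * b) \<le> 1/2 * ((cmod a)^2 + (cmod b)^2)" for a b :: complex
    using zero_le_power2[of "cmod a - cmod b"] by (simp add: norm_mult power2_eq_square algebra_simps)
  then show ?thesis
    by (intro summable_on_comparison_test[OF s]) auto
qed

lemma l2_summable:
  assumes "v \<in> l2" "w \<in> l2" shows "(\<lambda>k. cnj (v k) * w k) summable_on UNIV"
  by (rule abs_summable_summable) (rule l2_abs_summable[OF assms])

lemma l2inner_add_right: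
  assumes "v \<in> l2" "w1 \<in> l2" "w2 \<in> l2"
  shows "l2inner v (\<lambda>k. w1 k + w2 k) = l2inner v w1 + l2inner v w2"
  unfolding l2inner_def using l2_summable[OF assms(1,2)] l2_summable[OF assms(1,3)]
  by (simp add: distrib_left infsum_add)

lemma l2inner_scale_right: "l2inner v (\<lambda>k. c * w k) = c * l2inner v w"
  unfolding l2inner_def
  by (subst infsum_cmult_right'[symmetric]) (simp add: mult.left_commute)

lemma l2inner_cnj: "l2inner w v = cnj (l2inner v w)"
  unfolding l2inner_def by (simp flip: infsum_cnj add: mult.commute)

lemma l2inner_add_left:
  assumes "v1 \<in> l2" "v2 \<in> l2" "w \<in> l2"
  shows "l2inner (\<lambda>k. v1 k + v2 k) w = l2inner v1 w + l2inner v2 w"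
  using l2inner_add_right[OF assms(3,1,2)] by (metis complex_cnj_add l2inner_cnj)

lemma l2inner_scale_left: "l2inner (\<lambda>k. c * v k) w = cnj c * l2inner v w"
  by (metis complex_cnj_mult l2inner_cnj l2inner_scale_right)

lemma l2inner_zero_right [simp]: "l2inner v (\<lambda>k. 0) = 0"
  by (simp add: l2inner_def)

lemma l2_sum_square_nonneg: "0 \<le> (\<Sum>\<^sub>\<infinity>k. (cmod (v k))^2)"
  using infsum_nonneg[of UNIV "\<lambda>k. (cmod (v k))^2"] by simp

lemma l2norm_nonneg: "0 \<le> l2norm v"
  by (simp add: l2norm_def l2_sum_square_nonneg)

lemma l2norm_zero [simp]: "l2norm (\<lambda>k. 0) = 0"
  by (simp add: l2norm_def)

lemma l2inner_self:
  assumes "v \<in> l2" shows "l2inner v v = of_real ((l2norm v)^2)"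
proof -
  have "l2inner v v = (\<Sum>\<^sub>\<infinity>k. of_real ((cmod (v k))^2))"
    unfolding l2inner_def by (intro infsum_cong) (simp add: complex_norm_square[symmetric] mult.commute)
  also have "\<dots> = of_real (\<Sum>\<^sub>\<infinity>k. (cmod (v k))^2)"
    using has_sum_of_real[OF has_sum_infsum] assms infsumI by (metis l2_def mem_Collect_eq)
  finally show ?thesis
    by (simp add: l2norm_def l2_sum_square_nonneg)
qed

lemma l2norm_eq_0_imp_zero:
  assumes "v \<in> l2" "l2norm v = 0" shows "v = (\<lambda>k. 0)"
proof
  fix k
  have "(\<Sum>\<^sub>\<infinity>k. (cmod (v k))^2) = 0"
    using assms(2) l2_sum_square_nonneg[of v] by (simp add: l2norm_def)
  then have "(cmod (v k))^2 = 0"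
    using nonneg_infsum_le_0D[of "\<lambda>k. (cmod (v k))^2" UNIV k] assms(1) by (simp add: l2_def)
  then show "v k = 0" by simp
qed

lemma infsum_norm_mult_le_l2norm:
  assumes "v \<in> l2" "w \<in> l2"
  shows "(\<Sum>\<^sub>\<infinity>k. cmod (v k) * cmod (w k)) \<le> l2norm v * l2norm w"
proof -
  define A where "A = (\<Sum>\<^sub>\<infinity>k. (cmod (v k))^2)"
  define B where "B = (\<Sum>\<^sub>\<infinity>k. (cmod (w k))^2)"
  have A0: "A \<ge> 0" "B \<ge> 0" unfolding A_def B_def by (simp_all add: l2_sum_square_nonneg)
  have nv: "l2norm v = sqrt A" "l2norm w = sqrt B" by (simp_all add: l2norm_def A_def B_def)
  show ?thesis
  proof (cases "A = 0 \<or> B = 0")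
    case True
    then have "l2norm v = 0 \<or> l2norm w = 0" using nv by auto
    then have "v = (\<lambda>k. 0) \<or> w = (\<lambda>k. 0)" using l2norm_eq_0_imp_zero assms by blast
    then show ?thesis using nv A0 by auto
  next
    case False
    then have Ap: "A > 0" "B > 0" using A0 by auto
    define t where "t = sqrt B / sqrt A"
    have tp: "t > 0" using Ap by (simp add: t_def)
    \<comment> \<open>weighted AM-GM, with the weight \<open>t\<close> chosen to balance the two sums\<close>
    have pt: "cmod (v k) * cmod (w k) \<le> 1/2 * (t * (cmod (v k))^2 + (1/t) * (cmod (w k))^2)" for k
    proof -
      have "0 \<le> (t * cmod (v k) - cmod (w k))^2" by simp
      then have "2 * t * (cmod (v k) * cmod (w k)) \<le> t * (t * (cmod (v k))^2 + (1/t) * (cmod (w k))^2)"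
        using tp by (simp add: power2_eq_square algebra_simps)
      then show ?thesis using tp by (simp add: mult_le_cancel_left_pos)
    qed
    have sv: "(\<lambda>k. (cmod (v k))^2) summable_on UNIV" and sw: "(\<lambda>k. (cmod (w k))^2) summable_on UNIV"
      using assms by (auto simp: l2_def)
    have "(\<Sum>\<^sub>\<infinity>k. cmod (v k) * cmod (w k)) \<le> (\<Sum>\<^sub>\<infinity>k. 1/2 * (t * (cmod (v k))^2 + (1/t) * (cmod (w k))^2))"
      using l2_abs_summable[OF assms]
      by (intro infsum_mono pt summable_on_cmult_right summable_on_add sv sw) (simp add: norm_mult)
    also have "\<dots> = 1/2 * ((\<Sum>\<^sub>\<infinity>k. t * (cmod (v k))^2) + (\<Sum>\<^sub>\<infinity>k. (1/t) * (cmod (w k))^2))"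
      by (subst infsum_cmult_right, intro summable_on_cmult_right summable_on_add sv sw)
        (subst infsum_add, (intro summable_on_cmult_right sv sw)+, rule refl)
    also have "\<dots> = 1/2 * (t * A + (1/t) * B)"
      unfolding A_def B_def by (simp only: infsum_cmult_right[OF sv] infsum_cmult_right[OF sw])
    also have "\<dots> = sqrt A * sqrt B"
      using Ap unfolding t_def by (simp add: field_simps flip: real_sqrt_mult)
    finally show ?thesis using nv by simp
  qed
qed

lemma l2inner_norm_le:
  assumes "v \<in> l2" "w \<in> l2" shows "cmod (l2inner v w) \<le> l2norm v * l2norm w"
proof -
  have "cmod (l2inner v w) \<le> (\<Sum>\<^sub>\<infinity>k. cmod (cnj (v k) * w k))"
    unfolding l2inner_def by (rule norm_infsum_bound[OF l2_abs_summable[OF assms]])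
  also have "\<dots> = (\<Sum>\<^sub>\<infinity>k. cmod (v k) * cmod (w k))" by (simp add: norm_mult)
  also have "\<dots> \<le> l2norm v * l2norm w" by (rule infsum_norm_mult_le_l2norm[OF assms])
  finally show ?thesis .
qed

section \<open>Bounded operators and their adjoints\<close>

lemma l2op_in: "l2op T \<Longrightarrow> v \<in> l2 \<Longrightarrow> T v \<in> l2"
  by (simp add: l2op_def)

lemma l2op_add: "l2op T \<Longrightarrow> v \<in> l2 \<Longrightarrow> w \<in> l2 \<Longrightarrow> T (\<lambda>k. v k + w k) = (\<lambda>k. T v k + T w k)"
  by (simp add: l2op_def)

lemma l2op_scale: "l2op T \<Longrightarrow> v \<in> l2 \<Longrightarrow> T (\<lambda>k. c * v k) = (\<lambda>k. c * T v k)"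
  by (simp add: l2op_def)

lemma l2op_out: "l2op T \<Longrightarrow> v \<notin> l2 \<Longrightarrow> T v = (\<lambda>k. 0)"
  by (simp add: l2op_def)

lemma l2op_zero: "l2op T \<Longrightarrow> T (\<lambda>k. 0) = (\<lambda>k. 0)"
  using l2op_scale[of T "\<lambda>k. 0" 0] by simp

lemma l2op_bound:
  fixes T :: "'k op"
  assumes "l2op T"
  obtains C where "C \<ge> 0" "\<And>v. v \<in> l2 \<Longrightarrow> l2norm (T v) \<le> C * l2norm v"
proof -
  obtain C where C: "\<forall>v\<in>l2. l2norm (T v) \<le> C * l2norm v"
    using assms by (auto simp: l2op_def)
  have "l2norm (T v) \<le> max C 0 * l2norm v" if "v \<in> l2" for v
    using C that mult_right_mono[OF max.cobounded1[of C 0] l2norm_nonneg[of v]] by force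
  then show ?thesis by (intro that[of "max C 0"]) auto
qed

definition l2_basis :: "'k \<Rightarrow> 'k \<Rightarrow> complex" where
  "l2_basis k = (\<lambda>j. if j = k then 1 else 0)"

definition l2_trunc :: "'k set \<Rightarrow> ('k \<Rightarrow> complex) \<Rightarrow> ('k \<Rightarrow> complex)" where
  "l2_trunc F w = (\<lambda>j. if j \<in> F then w j else 0)"

lemma l2_basis_l2: "l2_basis k \<in> l2"
  by (rule l2_finite_support[of "{k}"]) (auto simp: l2_basis_def)

lemma l2_trunc_l2: "finite F \<Longrightarrow> l2_trunc F w \<in> l2"
  by (rule l2_finite_support[of F]) (auto simp: l2_trunc_def)

lemma infsum_if_finite:
  assumes "finite F" shows "(\<Sum>\<^sub>\<infinity>k. (if k \<in> F then f k else 0)) = sum f F"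
proof -
  have "(\<Sum>\<^sub>\<infinity>k. (if k \<in> F then f k else 0)) = infsum f F"
    by (rule infsum_cong_neutral) auto
  then show ?thesis using assms by simp
qed

lemma l2inner_l2op_trunc:
  assumes T: "l2op T" and v: "v \<in> l2" and F: "finite F"
  shows "l2inner v (T (l2_trunc F w)) = (\<Sum>k\<in>F. w k * l2inner v (T (l2_basis k)))"
  using F
proof (induction F rule: finite_induct)
  case empty
  have "l2_trunc {} w = (\<lambda>k. 0)" by (simp add: l2_trunc_def)
  then show ?case using l2op_zero[OF T] by simp
next
  case (insert k F)
  have eq: "l2_trunc (insert k F) w = (\<lambda>j. l2_trunc F w j + w k * l2_basis k j)"
    using insert by (auto simp: l2_trunc_def l2_basis_def fun_eq_iff)
  have "T (l2_trunc (insert k F) w) = (\<lambda>j. T (l2_trunc F w) j + w k * T (l2_basis k) j)"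
    unfolding eq using l2op_add[OF T l2_trunc_l2[OF insert(1)] l2_scale[OF l2_basis_l2]]
      l2op_scale[OF T l2_basis_l2] by simp
  then show ?case
    using insert l2inner_add_right[OF v l2op_in[OF T l2_trunc_l2] l2_scale[OF l2op_in[OF T l2_basis_l2]]]
    by (simp add: l2inner_scale_right)
qed

text \<open>Weak continuity of \<open>w \<mapsto> \<langle>v, T w\<rangle>\<close>: the tail of \<open>w\<close> outside a finite \<open>F\<close> has norm
  \<open>(\<parallel>w\<parallel>\<^sup>2 - \<Sum>\<^sub>F |w\<^sub>k|\<^sup>2)\<^sup>1\<^sup>/\<^sup>2 \<rightarrow> 0\<close>.\<close>

lemma has_sum_l2inner_l2op:
  assumes T: "l2op T" and v: "v \<in> l2" and w: "w \<in> l2"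
  shows "((\<lambda>k. w k * l2inner v (T (l2_basis k))) has_sum l2inner v (T w)) UNIV"
proof -
  obtain C where C: "C \<ge> 0" "\<And>x. x \<in> l2 \<Longrightarrow> l2norm (T x) \<le> C * l2norm x"
    using l2op_bound[OF T] by blast
  define g where "g = (\<lambda>k. (cmod (w k))^2)"
  define s where "s = infsum g UNIV"
  have gs: "g summable_on UNIV" using w by (simp add: g_def l2_def)
  have hs: "(sum g \<longlongrightarrow> s) (finite_subsets_at_top UNIV)"
    using has_sum_infsum[OF gs] by (simp add: s_def has_sum_def)
  define \<phi> where "\<phi> x = l2inner v (T x)" for x
  have bound: "norm (\<phi> (l2_trunc F w) - \<phi> w) \<le> l2norm v * C * sqrt (s - sum g F)"
    if F: "finite F" for F
  proof -
    define r where "r = (\<lambda>j. w j + (-1) * l2_trunc F w j)"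
    have r: "r \<in> l2" unfolding r_def by (intro l2_add w l2_scale l2_trunc_l2 F)
    have "w = (\<lambda>j. l2_trunc F w j + r j)" by (simp add: r_def fun_eq_iff)
    then have "T w = (\<lambda>j. T (l2_trunc F w) j + T r j)"
      using l2op_add[OF T l2_trunc_l2[OF F] r] by metis
    then have "\<phi> w = \<phi> (l2_trunc F w) + \<phi> r"
      unfolding \<phi>_def using l2inner_add_right[OF v l2op_in[OF T l2_trunc_l2[OF F]] l2op_in[OF T r]]
      by simp
    then have "norm (\<phi> (l2_trunc F w) - \<phi> w) = norm (\<phi> r)" by (simp add: norm_minus_commute)
    also have "\<dots> \<le> l2norm v * l2norm (T r)"
      unfolding \<phi>_def by (rule l2inner_norm_le[OF v l2op_in[OF T r]])
    also have "\<dots> \<le> l2norm v * (C * l2norm r)"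
      by (rule mult_left_mono[OF C(2)[OF r] l2norm_nonneg])
    also have "l2norm r = sqrt (s - sum g F)"
    proof -
      have "(\<Sum>\<^sub>\<infinity>k. (cmod (r k))^2) = infsum g (UNIV - F)"
        by (rule infsum_cong_neutral) (auto simp: r_def l2_trunc_def g_def)
      also have "\<dots> = s - infsum g F"
        unfolding s_def by (rule infsum_Diff[OF gs]) (auto simp: F)
      finally show ?thesis using F by (simp add: l2norm_def)
    qed
    finally show ?thesis by (simp add: mult.assoc)
  qed
  have "((\<lambda>F. l2norm v * C * sqrt (s - sum g F)) \<longlongrightarrow> l2norm v * C * sqrt (s - s))
      (finite_subsets_at_top UNIV)"
    by (intro tendsto_mult_left tendsto_real_sqrt tendsto_diff tendsto_const hs)
  then have "((\<lambda>F. l2norm v * C * sqrt (s - sum g F)) \<longlongrightarrow> 0) (finite_subsets_at_top UNIV)"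
    by simp
  then have "((\<lambda>F. \<phi> (l2_trunc F w) - \<phi> w) \<longlongrightarrow> 0) (finite_subsets_at_top UNIV)"
    by (rule Lim_null_comparison[rotated]) (auto intro: bound)
  then have "((\<lambda>F. \<phi> (l2_trunc F w)) \<longlongrightarrow> \<phi> w) (finite_subsets_at_top UNIV)"
    by (rule LIM_zero_cancel)
  moreover have "\<forall>\<^sub>F F in finite_subsets_at_top UNIV.
      \<phi> (l2_trunc F w) = (\<Sum>k\<in>F. w k * l2inner v (T (l2_basis k)))"
    by (auto simp: \<phi>_def l2inner_l2op_trunc[OF T v])
  ultimately show ?thesis
    unfolding has_sum_def \<phi>_def using tendsto_cong[of "\<lambda>F. l2inner v (T (l2_trunc F w))"] by simp
qed

definition adjoint_op :: "'k op \<Rightarrow> 'k op" where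
  "adjoint_op T = (\<lambda>v. if v \<in> l2 then (\<lambda>k. l2inner (T (l2_basis k)) v) else (\<lambda>k. 0))"

lemma adjoint_op_inner:
  assumes T: "l2op T" and v: "v \<in> l2" and w: "w \<in> l2"
  shows "l2inner (adjoint_op T v) w = l2inner v (T w)"
proof -
  have cnj_eq: "cnj (l2inner (T (l2_basis k)) v) = l2inner v (T (l2_basis k))" for k
    by (simp add: l2inner_cnj[of "T (l2_basis k)" v])
  have "l2inner (adjoint_op T v) w = (\<Sum>\<^sub>\<infinity>k. w k * l2inner v (T (l2_basis k)))"
    using v unfolding adjoint_op_def
    by (simp add: l2inner_def[of "\<lambda>k. l2inner (T (l2_basis k)) v"] cnj_eq mult.commute)
  also have "\<dots> = l2inner v (T w)" by (rule infsumI[OF has_sum_l2inner_l2op[OF T v w]])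
  finally show ?thesis .
qed

lemma le_square_if_le_mult_sqrt:
  fixes X K :: real
  assumes "0 \<le> X" "0 \<le> K" "X \<le> K * sqrt X" shows "X \<le> K^2"
proof (cases "X = 0")
  case False
  then have p: "sqrt X > 0" using assms by simp
  have "sqrt X * sqrt X \<le> K * sqrt X" using assms by simp
  then have "sqrt X \<le> K" using p by (rule mult_right_le_imp_le)
  then have "sqrt X * sqrt X \<le> K * K" using p assms(2) by (intro mult_mono) auto
  then show ?thesis using assms(1) by (simp add: power2_eq_square)
qed simp

lemma adjoint_op_l2:
  assumes T: "l2op T" and v: "v \<in> l2"
  shows "adjoint_op T v \<in> l2"
proof -
  obtain C where C: "C \<ge> 0" "\<And>x. x \<in> l2 \<Longrightarrow> l2norm (T x) \<le> C * l2norm x"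
    using l2op_bound[OF T] by blast
  define c where "c = adjoint_op T v"
  define K where "K = l2norm v * C"
  have K: "K \<ge> 0" unfolding K_def by (rule mult_nonneg_nonneg[OF l2norm_nonneg C(1)])
  have "sum (\<lambda>k. (cmod (c k))^2) F \<le> K^2" if F: "finite F" for F
  proof -
    define X where "X = sum (\<lambda>k. (cmod (c k))^2) F"
    have X0: "X \<ge> 0" by (simp add: X_def sum_nonneg)
    have "l2inner c (l2_trunc F c) = (\<Sum>\<^sub>\<infinity>k. (if k \<in> F then cnj (c k) * c k else 0))"
      unfolding l2inner_def l2_trunc_def by (intro infsum_cong) auto
    also have "\<dots> = of_real X" unfolding X_def of_real_sum infsum_if_finite[OF F]
      by (rule sum.cong[OF refl]) (subst complex_norm_square, simp add: mult.commute)
    finally have e1: "l2inner c (l2_trunc F c) = of_real X" .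
    have "(\<Sum>\<^sub>\<infinity>k. (cmod (l2_trunc F c k))^2) = (\<Sum>\<^sub>\<infinity>k. (if k \<in> F then (cmod (c k))^2 else 0))"
      by (intro infsum_cong) (auto simp: l2_trunc_def)
    then have norm_trunc: "l2norm (l2_trunc F c) = sqrt X"
      by (simp add: l2norm_def X_def infsum_if_finite[OF F])
    have "X = cmod (l2inner c (l2_trunc F c))" using e1 X0 by simp
    also have "\<dots> = cmod (l2inner v (T (l2_trunc F c)))"
      unfolding c_def by (simp add: adjoint_op_inner[OF T v l2_trunc_l2[OF F]])
    also have "\<dots> \<le> l2norm v * l2norm (T (l2_trunc F c))"
      by (rule l2inner_norm_le[OF v l2op_in[OF T l2_trunc_l2[OF F]]])
    also have "\<dots> \<le> l2norm v * (C * l2norm (l2_trunc F c))"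
      by (rule mult_left_mono[OF C(2)[OF l2_trunc_l2[OF F]] l2norm_nonneg])
    also have "\<dots> = K * sqrt X" using norm_trunc by (simp add: K_def)
    finally show ?thesis using le_square_if_le_mult_sqrt[OF X0 K] by (simp add: X_def)
  qed
  then have "(\<lambda>k. (cmod (c k))^2) summable_on UNIV"
    by (intro nonneg_bdd_above_summable_on) (auto simp: bdd_above_def)
  then show ?thesis by (simp add: c_def l2_def)
qed

lemma adjoint_op_bound:
  assumes T: "l2op T" and "C \<ge> 0" and C: "\<And>x. x \<in> l2 \<Longrightarrow> l2norm (T x) \<le> C * l2norm x"
    and v: "v \<in> l2"
  shows "l2norm (adjoint_op T v) \<le> C * l2norm v"
proof -
  define a where "a = l2norm (adjoint_op T v)"
  have a0: "a \<ge> 0" by (simp add: a_def l2norm_nonneg)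
  have Tv: "adjoint_op T v \<in> l2" by (rule adjoint_op_l2[OF T v])
  have "a^2 = cmod (l2inner (adjoint_op T v) (adjoint_op T v))"
    using l2inner_self[OF Tv] by (simp add: a_def norm_power)
  also have "\<dots> = cmod (l2inner v (T (adjoint_op T v)))"
    by (simp add: adjoint_op_inner[OF T v Tv])
  also have "\<dots> \<le> l2norm v * l2norm (T (adjoint_op T v))"
    by (rule l2inner_norm_le[OF v l2op_in[OF T Tv]])
  also have "\<dots> \<le> l2norm v * (C * a)"
    unfolding a_def by (rule mult_left_mono[OF C[OF Tv] l2norm_nonneg])
  finally have "a * a \<le> (C * l2norm v) * a" by (simp add: power2_eq_square algebra_simps)
  then show ?thesis using a0 \<open>C \<ge> 0\<close> l2norm_nonneg[of v] by (cases "a = 0") (auto simp: a_def)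
qed

lemma adjoint_op_is_adjoint:
  assumes T: "l2op T" shows "is_adjoint (adjoint_op T) T"
proof -
  obtain C where C: "C \<ge> 0" "\<And>x. x \<in> l2 \<Longrightarrow> l2norm (T x) \<le> C * l2norm x"
    using l2op_bound[OF T] by blast
  have add: "adjoint_op T (\<lambda>k. v k + w k) = (\<lambda>k. adjoint_op T v k + adjoint_op T w k)"
    if "v \<in> l2" "w \<in> l2" for v w
    using that l2_add[OF that] l2inner_add_right[OF l2op_in[OF T l2_basis_l2] that]
    by (simp add: adjoint_op_def)
  have scale: "adjoint_op T (\<lambda>k. c * v k) = (\<lambda>k. c * adjoint_op T v k)" if "v \<in> l2" for v c
    using that l2_scale[OF that] by (simp add: adjoint_op_def l2inner_scale_right)
  show ?thesis
    unfolding is_adjoint_def l2op_def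
    using adjoint_op_l2[OF T] add scale adjoint_op_bound[OF T C] adjoint_op_inner[OF T]
    by (auto simp: adjoint_op_def intro!: exI[of _ C])
qed

lemma adjoint_unique:
  assumes "is_adjoint S1 T" "is_adjoint S2 T" shows "S1 = S2"
proof
  fix v
  have S1: "l2op S1" and S2: "l2op S2" using assms by (auto simp: is_adjoint_def)
  show "S1 v = S2 v"
  proof (cases "v \<in> l2")
    case False then show ?thesis using l2op_out[OF S1] l2op_out[OF S2] by simp
  next
    case v: True
    define d where "d = (\<lambda>k. S1 v k + (-1) * S2 v k)"
    have d: "d \<in> l2" unfolding d_def by (intro l2_add l2_scale l2op_in[OF S1 v] l2op_in[OF S2 v])
    have "l2inner d w = 0" if w: "w \<in> l2" for w
      unfolding d_def l2inner_add_left[OF l2op_in[OF S1 v] l2_scale[OF l2op_in[OF S2 v]] w]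
        l2inner_scale_left
      using assms v w by (simp add: is_adjoint_def)
    then have "l2norm d = 0" using l2inner_self[OF d] l2norm_nonneg[of d] d by simp
    then have "d = (\<lambda>k. 0)" using l2norm_eq_0_imp_zero[OF d] by simp
    then show ?thesis unfolding d_def by (simp add: fun_eq_iff)
  qed
qed

lemma adj_is_adjoint: "l2op T \<Longrightarrow> is_adjoint (adj T) T"
  unfolding adj_def by (rule someI_ex[of "\<lambda>S. is_adjoint S T"]) (use adjoint_op_is_adjoint in blast)

lemma adj_eqI: "is_adjoint S T \<Longrightarrow> l2op T \<Longrightarrow> adj T = S"
  using adj_is_adjoint adjoint_unique by blast

lemma adj_l2op: "l2op T \<Longrightarrow> l2op (adj T)"
  using adj_is_adjoint is_adjoint_def by blast

lemma adj_inner: "l2op T \<Longrightarrow> v \<in> l2 \<Longrightarrow> w \<in> l2 \<Longrightarrow> l2inner (adj T v) w = l2inner v (T w)"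
  using adj_is_adjoint is_adjoint_def by blast

lemma inner_adj:
  assumes "l2op T" "v \<in> l2" "w \<in> l2" shows "l2inner (T v) w = l2inner v (adj T w)"
  using adj_inner[OF assms(1,3,2)] by (metis l2inner_cnj)

lemma adj_adj: "l2op T \<Longrightarrow> adj (adj T) = T"
  by (rule adj_eqI) (auto simp: is_adjoint_def adj_l2op inner_adj)

lemma op_add_eq_plus: "op_add S T = S + T"
  by (simp add: op_add_def fun_eq_iff)

lemma op_zero_eq_zero: "op_zero = 0"
  by (simp add: op_zero_def fun_eq_iff)

lemma sum_op_apply: "(sum (f :: _ \<Rightarrow> 'k op) S) v k = (\<Sum>i\<in>S. f i v k)"
  by (induction S rule: infinite_finite_induct) auto

lemma op_scale_scale: "op_scale c (op_scale d A) = op_scale (c * d) A"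
  by (simp add: op_scale_def mult.assoc)

lemma op_scale_one [simp]: "op_scale 1 A = A"
  by (simp add: op_scale_def)

lemma op_scale_zero_left [simp]: "op_scale 0 A = 0"
  by (simp add: op_scale_def fun_eq_iff)

lemma op_scale_zero_right [simp]: "op_scale c (0 :: 'k op) = 0"
  by (simp add: op_scale_def fun_eq_iff)

lemma op_scale_cancel:
  assumes "op_scale a A = op_scale b A" "A \<noteq> 0" shows "a = b"
proof -
  obtain v k where "A v k \<noteq> 0" using assms(2) by (auto simp: fun_eq_iff)
  moreover have "a * A v k = b * A v k" using assms(1) by (metis op_scale_def)
  ultimately show ?thesis by simp
qed

lemma l2op_zero_op: "l2op (0 :: 'k op)"
  unfolding l2op_def by (auto simp: fun_eq_iff zero_fun_def intro: exI[of _ 0])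

lemma l2op_comp:
  assumes A: "l2op A" and B: "l2op B" shows "l2op (A \<circ> B)"
proof -
  obtain CA where CA: "CA \<ge> 0" "\<And>x. x \<in> l2 \<Longrightarrow> l2norm (A x) \<le> CA * l2norm x"
    using l2op_bound[OF A] by blast
  obtain CB where CB: "\<And>x. x \<in> l2 \<Longrightarrow> l2norm (B x) \<le> CB * l2norm x"
    using l2op_bound[OF B] by blast
  have "l2norm (A (B v)) \<le> (CA * CB) * l2norm v" if v: "v \<in> l2" for v
    using CA(2)[OF l2op_in[OF B v]] mult_left_mono[OF CB[OF v] CA(1)] by (simp add: mult.assoc)
  then show ?thesis unfolding l2op_def
    using l2op_in[OF A] l2op_in[OF B] l2op_add[OF A] l2op_add[OF B] l2op_scale[OF A]
      l2op_scale[OF B] l2op_out[OF B] l2op_zero[OF A]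
    by (auto intro!: exI[of _ "CA * CB"])
qed

lemma comp_add_right:
  assumes R: "l2op R" and A: "l2op A" and B: "l2op B"
  shows "R \<circ> (A + B) = (R \<circ> A) + (R \<circ> B)"
proof
  fix v
  show "(R \<circ> (A + B)) v = ((R \<circ> A) + (R \<circ> B)) v"
  proof (cases "v \<in> l2")
    case True
    then show ?thesis using l2op_add[OF R l2op_in[OF A True] l2op_in[OF B True]]
      by (simp add: plus_fun_def)
  next
    case False
    then show ?thesis using l2op_out[OF A False] l2op_out[OF B False] l2op_zero[OF R]
      by (simp add: plus_fun_def)
  qed
qed

lemma comp_scale_left: "op_scale c A \<circ> R = op_scale c (A \<circ> R)"
  by (simp add: op_scale_def fun_eq_iff)

lemma comp_scale_right:
  assumes R: "l2op R" and A: "l2op A"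
  shows "R \<circ> op_scale c A = op_scale c (R \<circ> A)"
proof
  fix v
  show "(R \<circ> op_scale c A) v = op_scale c (R \<circ> A) v"
    using l2op_scale[OF R l2op_in[OF A]] l2op_out[OF A] l2op_zero[OF R]
    by (cases "v \<in> l2") (simp_all add: op_scale_def)
qed

lemma comp_zero_left: "(0 :: 'k op) \<circ> R = 0"
  by (simp add: fun_eq_iff)

lemma comp_zero_right: "l2op R \<Longrightarrow> R \<circ> (0 :: 'k op) = 0"
  using l2op_zero by (auto simp: fun_eq_iff zero_fun_def)

lemma sum_comp_left: "sum (f :: _ \<Rightarrow> 'k op) S \<circ> (R :: 'k op) = (\<Sum>i\<in>S. f i \<circ> R)"
  by (simp add: fun_eq_iff sum_op_apply[of "\<lambda>i. f i \<circ> R"] sum_op_apply[of f])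

lemma adj_comp:
  assumes S: "l2op S" and T: "l2op T" shows "adj (S \<circ> T) = adj T \<circ> adj S"
  using l2op_comp[OF adj_l2op[OF T] adj_l2op[OF S]] l2op_comp[OF S T]
  by (intro adj_eqI)
    (auto simp: is_adjoint_def adj_inner[OF T] adj_inner[OF S] l2op_in[OF adj_l2op[OF S]] l2op_in[OF T])

lemma adj_zero: "adj (0 :: 'k op) = 0"
  by (rule adj_eqI) (auto simp: is_adjoint_def l2op_zero_op l2inner_def)

lemma adj_add:
  assumes S: "l2op S" and T: "l2op T" and ST: "l2op (S + T)" and aST: "l2op (adj S + adj T)"
  shows "adj (S + T) = adj S + adj T"
proof (rule adj_eqI[OF _ ST])
  show "is_adjoint (adj S + adj T) (S + T)"
    unfolding is_adjoint_def
  proof (intro conjI aST ballI)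
    fix v w :: "'a \<Rightarrow> complex" assume v: "v \<in> l2" and w: "w \<in> l2"
    have "l2inner ((adj S + adj T) v) w = l2inner (adj S v) w + l2inner (adj T v) w"
      unfolding plus_fun_def
      by (rule l2inner_add_left[OF l2op_in[OF adj_l2op[OF S] v] l2op_in[OF adj_l2op[OF T] v] w])
    also have "\<dots> = l2inner v (S w) + l2inner v (T w)"
      by (simp add: adj_inner[OF S v w] adj_inner[OF T v w])
    also have "\<dots> = l2inner v ((S + T) w)"
      unfolding plus_fun_def by (rule l2inner_add_right[OF v l2op_in[OF S w] l2op_in[OF T w], symmetric])
    finally show "l2inner ((adj S + adj T) v) w = l2inner v ((S + T) w)" .
  qed
qed

lemma adj_scale_of_real:
  assumes T: "l2op T" and cT: "l2op (op_scale (of_real c) T)"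
    and caT: "l2op (op_scale (of_real c) (adj T))"
  shows "adj (op_scale (of_real c) T) = op_scale (of_real c) (adj T)"
  using caT adj_inner[OF T]
  by (intro adj_eqI[OF _ cT]) (auto simp: is_adjoint_def op_scale_def l2inner_scale_left l2inner_scale_right)

section \<open>Tracial von Neumann algebras\<close>

locale tracial_algebra =
  fixes N :: "'k op set" and \<tau> :: "'k op \<Rightarrow> complex"
  assumes tracial: "tracial_vna N \<tau>"
begin

lemma mem_l2op: "T \<in> N \<Longrightarrow> l2op T"
  using tracial by (auto simp: tracial_vna_def von_neumann_algebra_def)

lemma add_mem: "S \<in> N \<Longrightarrow> T \<in> N \<Longrightarrow> S + T \<in> N"
  using tracial by (auto simp: tracial_vna_def von_neumann_algebra_def op_add_eq_plus)

lemma comp_mem: "S \<in> N \<Longrightarrow> T \<in> N \<Longrightarrow> S \<circ> T \<in> N"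
  using tracial by (auto simp: tracial_vna_def von_neumann_algebra_def)

lemma scale_mem: "T \<in> N \<Longrightarrow> op_scale c T \<in> N"
  using tracial by (auto simp: tracial_vna_def von_neumann_algebra_def)

lemma adj_mem: "T \<in> N \<Longrightarrow> adj T \<in> N"
  using tracial by (auto simp: tracial_vna_def von_neumann_algebra_def)

lemma zero_mem: "0 \<in> N"
  using tracial scale_mem[of l2id 0] by (simp add: tracial_vna_def von_neumann_algebra_def)

lemma sum_mem: "(\<And>i. i \<in> S \<Longrightarrow> f i \<in> N) \<Longrightarrow> sum f S \<in> N"
  by (induction S rule: infinite_finite_induct) (auto simp: zero_mem add_mem)

lemma trace_add: "S \<in> N \<Longrightarrow> T \<in> N \<Longrightarrow> \<tau> (S + T) = \<tau> S + \<tau> T"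
  using tracial by (auto simp: tracial_vna_def op_add_eq_plus)

lemma trace_scale: "T \<in> N \<Longrightarrow> \<tau> (op_scale c T) = c * \<tau> T"
  using tracial by (auto simp: tracial_vna_def)

lemma trace_zero: "\<tau> 0 = 0"
  using trace_scale[OF zero_mem, of 0] by simp

lemma trace_comm: "S \<in> N \<Longrightarrow> T \<in> N \<Longrightarrow> \<tau> (S \<circ> T) = \<tau> (T \<circ> S)"
  using tracial by (auto simp: tracial_vna_def)

lemma faithful: "T \<in> N \<Longrightarrow> \<tau> (adj T \<circ> T) = 0 \<Longrightarrow> T = 0"
  using tracial by (auto simp: tracial_vna_def op_zero_eq_zero)

lemma trace_sum_scale:
  assumes "\<And>i. i \<in> S \<Longrightarrow> X i \<in> N"
  shows "\<tau> (\<Sum>i\<in>S. op_scale (of_real (c i)) (X i)) = (\<Sum>i\<in>S. of_real (c i) * \<tau> (X i))"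
  using assms
  by (induction S rule: infinite_finite_induct)
    (auto simp: trace_zero trace_add trace_scale scale_mem sum_mem)

lemma comp_sum_right:
  "R \<in> N \<Longrightarrow> (\<And>i. i \<in> S \<Longrightarrow> f i \<in> N) \<Longrightarrow> R \<circ> sum f S = (\<Sum>i\<in>S. R \<circ> f i)"
  by (induction S rule: infinite_finite_induct)
    (auto simp: comp_zero_right mem_l2op comp_add_right sum_mem)

lemma adj_sum: "(\<And>i. i \<in> S \<Longrightarrow> f i \<in> N) \<Longrightarrow> adj (sum f S) = (\<Sum>i\<in>S. adj (f i))"
  by (induction S rule: infinite_finite_induct)
    (auto simp: adj_zero mem_l2op sum_mem add_mem adj_mem adj_add)

lemma positive_mem: "P \<in> positive_elems N \<Longrightarrow> P \<in> N"
  by (auto simp: positive_elems_def comp_mem adj_mem)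

lemma positive_self_adjoint: "P \<in> positive_elems N \<Longrightarrow> adj P = P"
  by (auto simp: positive_elems_def adj_comp adj_adj mem_l2op adj_mem)

text \<open>With \<open>P = x\<^sup>* x\<close>, \<open>Q = y\<^sup>* y\<close> and \<open>z = y x\<^sup>*\<close>, traciality gives \<open>\<tau>(z\<^sup>* z) = \<tau>(P Q)\<close>;
  faithfulness then kills \<open>z\<close>, hence \<open>P Q = x\<^sup>* z\<^sup>* y\<close>.\<close>

lemma positive_comp_eq_0_if_trace_eq_0:
  assumes P: "P \<in> positive_elems N" and Q: "Q \<in> positive_elems N" and trace: "\<tau> (P \<circ> Q) = 0"
  shows "P \<circ> Q = 0"
proof -
  obtain x where x: "x \<in> N" "P = adj x \<circ> x" using P by (auto simp: positive_elems_def)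
  obtain y where y: "y \<in> N" "Q = adj y \<circ> y" using Q by (auto simp: positive_elems_def)
  define z where "z = y \<circ> adj x"
  have z: "z \<in> N" by (simp add: z_def comp_mem y x adj_mem)
  have adj_z: "adj z = x \<circ> adj y"
    unfolding z_def by (simp add: adj_comp adj_adj mem_l2op adj_mem x y)
  have "\<tau> (adj z \<circ> z) = \<tau> (x \<circ> (adj y \<circ> y \<circ> adj x))"
    unfolding adj_z by (simp add: z_def comp_assoc)
  also have "\<dots> = \<tau> ((adj y \<circ> y \<circ> adj x) \<circ> x)"
    by (rule trace_comm) (auto intro!: comp_mem adj_mem x y)
  also have "\<dots> = \<tau> (P \<circ> Q)"
    using trace_comm[OF positive_mem[OF Q] positive_mem[OF P]] by (simp add: x y comp_assoc)
  finally have "z = 0" using faithful[OF z] trace by simp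
  then have "x \<circ> adj y = 0" using adj_z adj_zero by metis
  moreover have "P \<circ> Q = adj x \<circ> (x \<circ> adj y) \<circ> y" by (simp add: x y comp_assoc)
  ultimately show ?thesis by (simp add: comp_zero_left comp_zero_right mem_l2op adj_mem x)
qed

lemma self_adjoint_cube_neq_0:
  assumes P: "P \<in> N" "adj P = P" and "P \<circ> P \<noteq> 0"
  shows "P \<circ> P \<circ> P \<noteq> 0"
proof
  assume "P \<circ> P \<circ> P = 0"
  then have "\<tau> (adj (P \<circ> P) \<circ> (P \<circ> P)) = 0"
    using P by (simp add: adj_comp mem_l2op comp_assoc comp_zero_right trace_zero)
  then show False using faithful[OF comp_mem[OF P(1) P(1)]] \<open>P \<circ> P \<noteq> 0\<close> by blast
qed

text \<open>\<open>Q\<^sup>2 P\<close> equals \<open>\<alpha>\<^sup>2 P\<^sup>3\<close> (moving \<open>Q\<close> past \<open>P\<close> twice) and \<open>\<alpha> \<beta>\<^sup>-\<^sup>1 P\<^sup>3\<close> (since \<open>\<beta> Q\<^sup>2 = Q P\<close>).\<close>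

lemma comp_scale_rigidity:
  assumes P: "P \<in> N" "adj P = P" "P \<circ> P \<noteq> 0" and Q: "Q \<in> N"
    and QP_P: "Q \<circ> P = op_scale (of_real \<alpha>) (P \<circ> P)"
    and QP_Q: "Q \<circ> P = op_scale (of_real \<beta>) (Q \<circ> Q)"
    and "\<alpha> \<noteq> 0"
  shows "\<alpha> * \<beta> = 1"
proof -
  have l2: "l2op P" "l2op Q" "l2op (P \<circ> P)" using P Q by (auto intro: mem_l2op comp_mem)
  have "Q \<circ> Q \<circ> P = Q \<circ> op_scale (of_real \<alpha>) (P \<circ> P)"
    by (simp add: QP_P comp_assoc)
  also have "\<dots> = op_scale (of_real \<alpha>) ((Q \<circ> P) \<circ> P)"
    by (simp add: comp_scale_right l2 comp_assoc)
  also have "\<dots> = op_scale (of_real (\<alpha> * \<alpha>)) (P \<circ> P \<circ> P)"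
    by (simp add: QP_P comp_scale_left op_scale_scale)
  finally have "op_scale (of_real \<beta>) (Q \<circ> Q \<circ> P) = op_scale (of_real (\<beta> * (\<alpha> * \<alpha>))) (P \<circ> P \<circ> P)"
    by (simp add: op_scale_scale)
  moreover have "op_scale (of_real \<beta>) (Q \<circ> Q \<circ> P) = (Q \<circ> P) \<circ> P"
    by (simp add: QP_Q comp_scale_left)
  then have "op_scale (of_real \<beta>) (Q \<circ> Q \<circ> P) = op_scale (of_real \<alpha>) (P \<circ> P \<circ> P)"
    by (simp add: QP_P comp_scale_left)
  ultimately have "\<beta> * (\<alpha> * \<alpha>) = \<alpha>"
    using op_scale_cancel self_adjoint_cube_neq_0[OF P] by (metis of_real_eq_iff)
  then show ?thesis using \<open>\<alpha> \<noteq> 0\<close> by (simp add: algebra_simps)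
qed

end

section \<open>Positive factorizations of Gram matrices\<close>

lemma sum_lessThan_eq_single:
  fixes f :: "nat \<Rightarrow> 'a::comm_monoid_add"
  assumes "k < n" "\<And>i. i < n \<Longrightarrow> i \<noteq> k \<Longrightarrow> f i = 0" shows "(\<Sum>i<n. f i) = f k"
  using assms by (subst sum.mono_neutral_right[of "{..<n}" "{k}"]) auto

lemma span_image_coeffs:
  fixes u :: "nat \<Rightarrow> 'v::real_vector"
  assumes K: "K \<subseteq> {..<n}" and x: "x \<in> span (u ` K)"
  shows "\<exists>a. (\<forall>i. i \<notin> K \<longrightarrow> a i = 0) \<and> (\<Sum>i<n. a i *\<^sub>R u i) = x"
  using x
proof (induction rule: span_induct_alt)
  case base
  show ?case by (intro exI[of _ "\<lambda>i. 0"]) simp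
next
  case (step c x y)
  then obtain a where a: "\<forall>i. i \<notin> K \<longrightarrow> a i = 0" "(\<Sum>i<n. a i *\<^sub>R u i) = y" by blast
  obtain k where k: "k \<in> K" "x = u k" using step by blast
  define a' where "a' i = a i + (if i = k then c else 0)" for i
  have "(\<Sum>i<n. a' i *\<^sub>R u i) = y + (\<Sum>i<n. (if i = k then c else 0) *\<^sub>R u i)"
    by (simp add: a'_def a(2)[symmetric] scaleR_add_left sum.distrib)
  also have "\<dots> = c *\<^sub>R x + y"
    using k K by (subst sum_lessThan_eq_single[of k]) auto
  finally show ?case using a(1) k(1) by (intro exI[of _ a']) (auto simp: a'_def)
qed

lemma parallel_if_inner_square_eq:
  fixes x y :: "'a::real_inner"
  assumes "(x \<bullet> y)^2 = (x \<bullet> x) * (y \<bullet> y)" "y \<noteq> 0"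
  shows "\<exists>c. x = c *\<^sub>R y"
proof -
  have "\<bar>y \<bullet> x\<bar>^2 = (norm y * norm x)^2"
    using assms(1) by (simp add: inner_commute power_mult_distrib power2_norm_eq_inner)
  then have "\<bar>y \<bullet> x\<bar> = norm y * norm x"
    using power2_eq_iff_nonneg[of "\<bar>y \<bullet> x\<bar>" "norm y * norm x"] by simp
  then have "x = 0 \<or> (\<exists>c. x = c *\<^sub>R y)"
    using assms(2) by (simp add: norm_cauchy_schwarz_equal collinear_lemma)
  then show ?thesis by (metis scaleR_zero_left)
qed

locale positive_gram_factorization = tracial_algebra N \<tau>
  for N :: "'k op set" and \<tau> :: "'k op \<Rightarrow> complex" +
  fixes n :: nat and u :: "nat \<Rightarrow> 'v::real_inner" and p :: "nat \<Rightarrow> 'k op"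
  assumes positive: "\<And>i. i < n \<Longrightarrow> p i \<in> positive_elems N"
    and gram: "\<And>i j. i < n \<Longrightarrow> j < n \<Longrightarrow> \<tau> (p i \<circ> p j) = of_real (u i \<bullet> u j)"
begin

definition op_comb :: "(nat \<Rightarrow> real) \<Rightarrow> 'k op" where
  "op_comb c = (\<Sum>i<n. op_scale (of_real (c i)) (p i))"

definition vec_comb :: "(nat \<Rightarrow> real) \<Rightarrow> 'v" where
  "vec_comb c = (\<Sum>i<n. c i *\<^sub>R u i)"

lemma p_mem: "i < n \<Longrightarrow> p i \<in> N"
  by (simp add: positive positive_mem)

lemma op_comb_mem: "op_comb c \<in> N"
  unfolding op_comb_def by (intro sum_mem scale_mem p_mem) simp

lemma adj_op_comb: "adj (op_comb c) = op_comb c"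
  unfolding op_comb_def
  by (subst adj_sum)
    (auto simp: scale_mem p_mem adj_scale_of_real mem_l2op adj_mem positive positive_self_adjoint)

lemma op_comb_comp: "op_comb c \<circ> R = (\<Sum>i<n. op_scale (of_real (c i)) (p i \<circ> R))"
  unfolding op_comb_def by (simp add: sum_comp_left comp_scale_left)

lemma comp_op_comb: "R \<in> N \<Longrightarrow> R \<circ> op_comb c = (\<Sum>i<n. op_scale (of_real (c i)) (R \<circ> p i))"
  unfolding op_comb_def
  by (subst comp_sum_right) (auto simp: scale_mem p_mem comp_scale_right mem_l2op)

lemma trace_op_comb_comp: "\<tau> (op_comb c \<circ> op_comb d) = of_real (vec_comb c \<bullet> vec_comb d)"
proof -
  have row: "\<tau> (p i \<circ> op_comb d) = of_real (u i \<bullet> vec_comb d)" if "i < n" for i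
  proof -
    have "\<tau> (p i \<circ> op_comb d) = (\<Sum>j<n. of_real (d j) * \<tau> (p i \<circ> p j))"
      unfolding comp_op_comb[OF p_mem[OF that]] by (rule trace_sum_scale) (simp add: comp_mem p_mem that)
    then show ?thesis
      unfolding vec_comb_def inner_sum_right by (simp add: gram that)
  qed
  have "\<tau> (op_comb c \<circ> op_comb d) = (\<Sum>i<n. of_real (c i) * \<tau> (p i \<circ> op_comb d))"
    unfolding op_comb_comp by (rule trace_sum_scale) (simp add: comp_mem p_mem op_comb_mem)
  then show ?thesis
    unfolding vec_comb_def[of c] inner_sum_left by (simp add: row)
qed

text \<open>Faithfulness: \<open>\<tau>(Z\<^sup>* Z) = |\<Sum> e\<^sub>i u\<^sub>i|\<^sup>2\<close> for \<open>Z = \<Sum> e\<^sub>i p\<^sub>i\<close>.\<close>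

lemma op_comb_eq_if_vec_comb_eq:
  assumes "vec_comb c = vec_comb d" shows "op_comb c = op_comb d"
proof -
  define e where "e i = c i - d i" for i
  have "vec_comb e = 0"
    using assms by (simp add: vec_comb_def e_def scaleR_diff_left sum_subtractf)
  then have "\<tau> (adj (op_comb e) \<circ> op_comb e) = 0"
    by (simp add: adj_op_comb trace_op_comb_comp)
  then have "op_comb e = 0" using faithful[OF op_comb_mem] by blast
  moreover have "op_comb e v k = op_comb c v k - op_comb d v k" for v k
    by (simp add: op_comb_def sum_op_apply op_scale_def e_def sum_subtractf left_diff_distrib)
  ultimately show ?thesis by (auto simp: fun_eq_iff)
qed

lemma op_comb_eq_p_if_vec_comb_eq_u:
  assumes "vec_comb c = u k" "k < n" shows "op_comb c = p k"
proof -
  define e where "e i = (if i = k then 1 else 0 :: real)" for i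
  have "vec_comb e = u k" "op_comb e = p k"
    unfolding vec_comb_def op_comb_def
    by (subst sum_lessThan_eq_single[OF \<open>k < n\<close>]; simp add: e_def)+
  then show ?thesis using op_comb_eq_if_vec_comb_eq assms(1) by metis
qed

lemma comp_eq_0_if_orthogonal:
  assumes "i < n" "j < n" "u i \<bullet> u j = 0" shows "p i \<circ> p j = 0"
  using assms gram[of i j] by (intro positive_comp_eq_0_if_trace_eq_0) (auto intro: positive)

text \<open>In \<open>p\<^sub>m = \<Sum>\<^sub>i\<^sub>\<in>\<^sub>K a\<^sub>i p\<^sub>i\<close> only the term \<open>a\<^sub>k p\<^sub>k\<close> survives multiplication by \<open>p\<^sub>k\<close>.\<close>

lemma pivot_comp_eq_scale:
  assumes K: "K \<subseteq> {..<n}" and k: "k \<in> K" "\<forall>i\<in>K - {k}. u k \<bullet> u i = 0"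
    and m: "m < n" "u m \<in> span (u ` K)"
  obtains a where "p m \<circ> p k = op_scale (of_real a) (p k \<circ> p k)"
    and "p k \<circ> p m = op_scale (of_real a) (p k \<circ> p k)"
proof -
  obtain c where c: "\<forall>i. i \<notin> K \<longrightarrow> c i = 0" "vec_comb c = u m"
    using span_image_coeffs[OF K m(2)] by (auto simp: vec_comb_def)
  have kn: "k < n" using K k by auto
  have pm: "p m = op_comb c" using op_comb_eq_p_if_vec_comb_eq_u[OF c(2) m(1)] by simp
  have vanish: "op_scale (of_real (c i)) (p i \<circ> p k) = 0 \<and> op_scale (of_real (c i)) (p k \<circ> p i) = 0"
    if "i < n" "i \<noteq> k" for i
  proof (cases "i \<in> K")
    case True
    then show ?thesis
      using k that kn comp_eq_0_if_orthogonal[of i k] comp_eq_0_if_orthogonal[of k i]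
      by (simp add: inner_commute)
  qed (use c(1) in simp)
  show ?thesis
    by (rule that[of "c k"])
      (simp_all add: pm op_comb_comp comp_op_comb p_mem kn sum_lessThan_eq_single[OF kn] vanish)
qed

lemma pivots_parallel:
  assumes I: "I \<subseteq> {..<n}" "k \<in> I" "\<forall>i\<in>I - {k}. u k \<bullet> u i = 0" "u l \<in> span (u ` I)"
    and J: "J \<subseteq> {..<n}" "l \<in> J" "\<forall>j\<in>J - {l}. u l \<bullet> u j = 0" "u k \<in> span (u ` J)"
    and nonorth: "u k \<bullet> u l \<noteq> 0"
  shows "\<exists>c. u k = c *\<^sub>R u l"
proof -
  have kl: "k < n" "l < n" using I J by auto
  obtain \<alpha> where \<alpha>: "p l \<circ> p k = op_scale (of_real \<alpha>) (p k \<circ> p k)"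
    using pivot_comp_eq_scale[OF I(1-3) kl(2) I(4)] by blast
  obtain \<beta> where \<beta>: "p l \<circ> p k = op_scale (of_real \<beta>) (p l \<circ> p l)"
    using pivot_comp_eq_scale[OF J(1-3) kl(1) J(4)] by blast
  have "of_real (u l \<bullet> u k) = \<tau> (op_scale (of_real \<alpha>) (p k \<circ> p k))"
       "of_real (u l \<bullet> u k) = \<tau> (op_scale (of_real \<beta>) (p l \<circ> p l))"
    using gram[of l k] kl by (simp_all add: \<alpha>[symmetric] \<beta>[symmetric])
  then have traces: "u k \<bullet> u l = \<alpha> * (u k \<bullet> u k)" "u k \<bullet> u l = \<beta> * (u l \<bullet> u l)"
    using kl by (simp_all add: trace_scale comp_mem p_mem gram inner_commute flip: of_real_mult)
  then have "\<alpha> \<noteq> 0" "p k \<circ> p k \<noteq> 0"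
    using nonorth gram[of k k] kl by (auto simp: trace_zero)
  then have "\<alpha> * \<beta> = 1"
    using kl by (intro comp_scale_rigidity[OF p_mem _ _ p_mem \<alpha> \<beta>])
      (auto simp: positive positive_self_adjoint)
  then have "(u k \<bullet> u l)^2 = (u k \<bullet> u k) * (u l \<bullet> u l)"
    using traces by (simp add: power2_eq_square) (metis mult.assoc mult.left_commute mult_1)
  then show ?thesis
    using nonorth by (intro parallel_if_inner_square_eq) auto
qed

end

theorem theorem6p2:
  fixes u :: "nat \<Rightarrow> real ^ 'd" and n :: nat and I J :: "nat set"
    and istar jstar :: nat
  assumes nonzero: "\<forall>i<n. u i \<noteq> 0"
    and nonneg: "\<forall>i<n. \<forall>j<n. u i \<bullet> u j \<ge> 0"
    and IJ: "I \<subseteq> {..<n}" "J \<subseteq> {..<n}"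
    and span_I: "span (u ` I) = span (u ` {..<n})"
    and span_J: "span (u ` J) = span (u ` {..<n})"
    and istar: "istar \<in> I" "\<forall>i\<in>I - {istar}. u istar \<bullet> u i = 0"
    and jstar: "jstar \<in> J" "\<forall>j\<in>J - {jstar}. u jstar \<bullet> u j = 0"
    and not_parallel: "\<not> (\<exists>c. u istar = c *\<^sub>R u jstar)"
    and nonorth: "u istar \<bullet> u jstar \<noteq> 0"
  shows "\<not> (\<exists>(N :: 'k op set) \<tau>. tracial_vna N \<tau> \<and>
             admits_pos_factorization N \<tau> n (\<lambda>i j. u i \<bullet> u j))"
proof
  assume "\<exists>(N :: 'k op set) \<tau>. tracial_vna N \<tau> \<and> admits_pos_factorization N \<tau> n (\<lambda>i j. u i \<bullet> u j)"
  then obtain N :: "'k op set" and \<tau> p where "tracial_vna N \<tau>"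
    and "\<forall>i<n. p i \<in> positive_elems N" "\<forall>i<n. \<forall>j<n. of_real (u i \<bullet> u j) = \<tau> (p i \<circ> p j)"
    unfolding admits_pos_factorization_def by blast
  then interpret positive_gram_factorization N \<tau> n u p
    by unfold_locales auto
  have "u jstar \<in> span (u ` I)" "u istar \<in> span (u ` J)"
    using IJ istar(1) jstar(1) by (auto simp: span_I span_J intro: span_base)
  then show False
    using pivots_parallel[OF IJ(1) istar _ IJ(2) jstar _ nonorth] not_parallel by blast
qed

end
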